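(* Define the operator $G$ on $\bar{\mathcal H}$ by $G(h)(s;D,X)=h(w(D,X);D,X)\,\mathbb I(s\ge w(D,X))$. (a) For every $h\in\bar{\mathcal H}$ such that $h(w_{n+1};D_{n+1},X_{n+1})>c_0$ almost surely for some constant $c_0>0$, one has $G(h)\in\bar{\mathcal H}$ and $J(G(h))\le J(h)$; in particular, under property (P5) for $h$ and $G(h)$, $\mathbb E[G(h)_i/G(h)(w_{n+1};D_{n+1},X_{n+1})]\le\mathbb E[h_i/h(w_{n+1};D_{n+1},X_{n+1})]$. (b) $G$ is idempotent: $G(G(h))=G(h)$ for all $h\in\bar{\mathcal H}$. In particular, applied to the identity transformation $h(s;D,X)=s$, the transformation $\mathbb I_w(s;D,X)=w(D,X)\,\mathbb I(s\ge w(D,X))$ satisfies $J(\mathbb I_w)\le J(\mathrm{id})$ whenever $w_{n+1}>c_0>0$ almost surely.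
   Context: Classification setting: feature space $\mathcal X$, finite label space $\mathcal Y$, non-conformity score $S:\mathcal X\times\mathcal Y\to[0,\infty)$. Data $(X_1,Y_1),\dots,(X_{n+1},Y_{n+1})$ are exchangeable; first $n$ calibration, $(X_{n+1},Y_{n+1})$ test. $S_i=S(X_i,Y_i)$, $D_{n+1}=\{(X_i,Y_i)\}_{i=1}^n$, $D_i=D_{n+1}\setminus\{(X_i,Y_i)\}$ ($i\le n$). A transformation is a measurable function $h(s;D,X)\ge0$ of a score $s\ge0$, a finite dataset $D$ and a feature $X$; $\bar{\mathcal H}$ is the class of transformations non-decreasing in $s$ for every fixed $(D,X)$. For a transformation $h$, $h_i=h(S_i;D_i,X_i)$. A size-constraint rule $\mathcal T$ maps (dataset, feature) to $\{1,\dots,|\mathcal Y|\}$, assumed $<|\mathcal Y|$ so thresholds are finite. Threshold function $w(D,X)=\sup\{l>0:|\{y\in\mathcal Y:S(X,y)<l\}|\le\mathcal T(D,X)\}$, $w_j=w(D_j,X_j)$. For a fixed $i\in\{1,\dots,n\}$, $J(h)=\mathbb E[h_i]\cdot\mathbb E[1/h(w_{n+1};D_{n+1},X_{n+1})]$. Property (P5) for $h$: $\mathbb E[h_i/h(w_{n+1};D_{n+1},X_{n+1})]=\mathbb E[h_i]\,\mathbb E[1/h(w_{n+1};D_{n+1},X_{n+1})]$. *)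

theory Defs
  imports "HOL-Probability.Probability" "HOL-Library.Multiset" "HOL-Combinatorics.Permutations"
begin

definition exchangeable :: "'w measure \<Rightarrow> 'z measure \<Rightarrow> (nat \<Rightarrow> 'w \<Rightarrow> 'z) \<Rightarrow> nat \<Rightarrow> bool" where
  "exchangeable M MZ Z m \<longleftrightarrow>
     (\<forall>j\<in>{1..m}. Z j \<in> M \<rightarrow>\<^sub>M MZ) \<and>
     (\<forall>\<pi>. \<pi> permutes {1..m} \<longrightarrow>
        distr M (PiM {1..m} (\<lambda>_. MZ)) (\<lambda>\<omega>. \<lambda>j\<in>{1..m}. Z (\<pi> j) \<omega>)
      = distr M (PiM {1..m} (\<lambda>_. MZ)) (\<lambda>\<omega>. \<lambda>j\<in>{1..m}. Z j \<omega>))"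

text \<open>Calibration dataset D_{n+1} (a multiset of the first n data points) and D_i.\<close>
definition dataD :: "(nat \<Rightarrow> 'w \<Rightarrow> 'x) \<Rightarrow> (nat \<Rightarrow> 'w \<Rightarrow> 'y) \<Rightarrow> nat \<Rightarrow> 'w \<Rightarrow> ('x \<times> 'y) multiset" where
  "dataD X Y n \<omega> = mset (map (\<lambda>j. (X j \<omega>, Y j \<omega>)) [1..<Suc n])"

definition dataDi :: "(nat \<Rightarrow> 'w \<Rightarrow> 'x) \<Rightarrow> (nat \<Rightarrow> 'w \<Rightarrow> 'y) \<Rightarrow> nat \<Rightarrow> nat \<Rightarrow> 'w \<Rightarrow> ('x \<times> 'y) multiset" where
  "dataDi X Y n i \<omega> = dataD X Y n \<omega> - {#(X i \<omega>, Y i \<omega>)#}"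

text \<open>Threshold function w(D,X) = sup{l>0 : |{y : S(X,y) < l}| \<le> T(D,X)} (sup of the empty set read as 0).\<close>
definition thr :: "('x \<Rightarrow> 'y \<Rightarrow> real) \<Rightarrow> (('x \<times> 'y) multiset \<Rightarrow> 'x \<Rightarrow> nat) \<Rightarrow> ('x \<times> 'y) multiset \<Rightarrow> 'x \<Rightarrow> real" where
  "thr S T D x = (let L = {l::real. 0 < l \<and> card {y. S x y < l} \<le> T D x} in if L = {} then 0 else Sup L)"

definition Hbar :: "(('x \<times> 'y) multiset \<times> 'x) measure \<Rightarrow> (real \<Rightarrow> ('x \<times> 'y) multiset \<Rightarrow> 'x \<Rightarrow> real) set" where
  "Hbar N = {h. (\<lambda>(s, c). h s (fst c) (snd c)) \<in> borel_measurable (borel \<Otimes>\<^sub>M N) \<and>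
                (\<forall>s D x. 0 \<le> s \<longrightarrow> 0 \<le> h s D x) \<and>
                (\<forall>D x. mono_on {0..} (\<lambda>s. h s D x))}"

definition Gop :: "(('x \<times> 'y) multiset \<Rightarrow> 'x \<Rightarrow> real) \<Rightarrow> (real \<Rightarrow> ('x \<times> 'y) multiset \<Rightarrow> 'x \<Rightarrow> real)
                     \<Rightarrow> (real \<Rightarrow> ('x \<times> 'y) multiset \<Rightarrow> 'x \<Rightarrow> real)" where
  "Gop w h = (\<lambda>s D x. h (w D x) D x * (if w D x \<le> s then 1 else 0))"

definition h_cal :: "('x \<Rightarrow> 'y \<Rightarrow> real) \<Rightarrow> (nat \<Rightarrow> 'w \<Rightarrow> 'x) \<Rightarrow> (nat \<Rightarrow> 'w \<Rightarrow> 'y) \<Rightarrow> nat \<Rightarrow> nat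
                      \<Rightarrow> (real \<Rightarrow> ('x \<times> 'y) multiset \<Rightarrow> 'x \<Rightarrow> real) \<Rightarrow> 'w \<Rightarrow> real" where
  "h_cal S X Y n i h \<omega> = h (S (X i \<omega>) (Y i \<omega>)) (dataDi X Y n i \<omega>) (X i \<omega>)"

definition h_test :: "('x \<Rightarrow> 'y \<Rightarrow> real) \<Rightarrow> (('x \<times> 'y) multiset \<Rightarrow> 'x \<Rightarrow> nat) \<Rightarrow> (nat \<Rightarrow> 'w \<Rightarrow> 'x) \<Rightarrow> (nat \<Rightarrow> 'w \<Rightarrow> 'y) \<Rightarrow> nat
                      \<Rightarrow> (real \<Rightarrow> ('x \<times> 'y) multiset \<Rightarrow> 'x \<Rightarrow> real) \<Rightarrow> 'w \<Rightarrow> real" where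
  "h_test S T X Y n h \<omega> = h (thr S T (dataD X Y n \<omega>) (X (Suc n) \<omega>)) (dataD X Y n \<omega>) (X (Suc n) \<omega>)"

definition Jfun :: "'w measure \<Rightarrow> ('x \<Rightarrow> 'y \<Rightarrow> real) \<Rightarrow> (('x \<times> 'y) multiset \<Rightarrow> 'x \<Rightarrow> nat) \<Rightarrow> (nat \<Rightarrow> 'w \<Rightarrow> 'x) \<Rightarrow> (nat \<Rightarrow> 'w \<Rightarrow> 'y)
                     \<Rightarrow> nat \<Rightarrow> nat \<Rightarrow> (real \<Rightarrow> ('x \<times> 'y) multiset \<Rightarrow> 'x \<Rightarrow> real) \<Rightarrow> ennreal" where
  "Jfun M S T X Y n i h =
     (\<integral>\<^sup>+ \<omega>. ennreal (h_cal S X Y n i h \<omega>) \<partial>M) * (\<integral>\<^sup>+ \<omega>. ennreal (1 / h_test S T X Y n h \<omega>) \<partial>M)"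

definition ratio_exp :: "'w measure \<Rightarrow> ('x \<Rightarrow> 'y \<Rightarrow> real) \<Rightarrow> (('x \<times> 'y) multiset \<Rightarrow> 'x \<Rightarrow> nat) \<Rightarrow> (nat \<Rightarrow> 'w \<Rightarrow> 'x) \<Rightarrow> (nat \<Rightarrow> 'w \<Rightarrow> 'y)
                     \<Rightarrow> nat \<Rightarrow> nat \<Rightarrow> (real \<Rightarrow> ('x \<times> 'y) multiset \<Rightarrow> 'x \<Rightarrow> real) \<Rightarrow> ennreal" where
  "ratio_exp M S T X Y n i h = (\<integral>\<^sup>+ \<omega>. ennreal (h_cal S X Y n i h \<omega> / h_test S T X Y n h \<omega>) \<partial>M)"

definition P5 :: "'w measure \<Rightarrow> ('x \<Rightarrow> 'y \<Rightarrow> real) \<Rightarrow> (('x \<times> 'y) multiset \<Rightarrow> 'x \<Rightarrow> nat) \<Rightarrow> (nat \<Rightarrow> 'w \<Rightarrow> 'x) \<Rightarrow> (nat \<Rightarrow> 'w \<Rightarrow> 'y)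
                     \<Rightarrow> nat \<Rightarrow> nat \<Rightarrow> (real \<Rightarrow> ('x \<times> 'y) multiset \<Rightarrow> 'x \<Rightarrow> real) \<Rightarrow> bool" where
  "P5 M S T X Y n i h \<longleftrightarrow> ratio_exp M S T X Y n i h = Jfun M S T X Y n i h"

end

theory Submission
  imports Defs
begin

(* Since h is non-decreasing and nonnegative on scores s >= 0, G(h) <= h there, while G(h) and h
   agree at the threshold w.  Hence the calibration factor E[h_i] of J can only decrease and the
   test factor E[1/h(w_{n+1}; D_{n+1}, X_{n+1})] is unchanged; under (P5) both ratio expectations
   equal J.  Idempotence holds because G(h)(w) = h(w).  That G(h) is again measurable rests on the
   description a < w(D,X) <-> |{y. S(X,y) <= a}| <= T(D,X) of the threshold for a >= 0, which
   makes w(D,X) measurable. *)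

definition thr_levels :: "('x \<Rightarrow> 'y \<Rightarrow> real) \<Rightarrow> (('x \<times> 'y) multiset \<Rightarrow> 'x \<Rightarrow> nat)
                          \<Rightarrow> ('x \<times> 'y) multiset \<Rightarrow> 'x \<Rightarrow> real set" where
  "thr_levels S T D x = {l. 0 < l \<and> card {y. S x y < l} \<le> T D x}"

lemma thr_eq: "thr S T D x = (if thr_levels S T D x = {} then 0 else Sup (thr_levels S T D x))"
  unfolding thr_def thr_levels_def Let_def by (rule refl)

lemma bdd_above_thr_levels:
  fixes S :: "'x \<Rightarrow> 'y::finite \<Rightarrow> real"
  assumes "T D x < CARD('y)"
  shows "bdd_above (thr_levels S T D x)"
proof (rule bdd_aboveI)
  fix l assume l: "l \<in> thr_levels S T D x"
  show "l \<le> Max (range (S x))"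
  proof (rule ccontr)
    assume "\<not> l \<le> Max (range (S x))"
    then have "S x y < l" for y using Max_ge[of "range (S x)" "S x y"] by (simp add: not_le)
    then have "{y. S x y < l} = UNIV" by auto
    then show False using l assms by (simp add: thr_levels_def)
  qed
qed

lemma thr_nonneg:
  fixes S :: "'x \<Rightarrow> 'y::finite \<Rightarrow> real"
  assumes "T D x < CARD('y)"
  shows "0 \<le> thr S T D x"
proof (cases "thr_levels S T D x = {}")
  case False
  then obtain l where l: "l \<in> thr_levels S T D x" by blast
  then have "l \<le> Sup (thr_levels S T D x)"
    using bdd_above_thr_levels[of T D x S, OF assms] by (rule cSup_upper)
  with l False show ?thesis by (simp add: thr_eq thr_levels_def)
qed (simp add: thr_eq)

lemma finite_gap_above:
  fixes a :: real
  assumes "finite A"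
  obtains l where "a < l" and "\<And>t. t \<in> A \<Longrightarrow> t < l \<longleftrightarrow> t \<le> a"
proof
  let ?l = "Min (insert (a + 1) {t \<in> A. a < t})"
  show "a < ?l" using assms by simp
  show "t < ?l \<longleftrightarrow> t \<le> a" if "t \<in> A" for t
    using assms that by (auto simp: not_le)
qed

lemma less_thr_iff:
  fixes S :: "'x \<Rightarrow> 'y::finite \<Rightarrow> real"
  assumes "T D x < CARD('y)" and "0 \<le> a"
  shows "a < thr S T D x \<longleftrightarrow> card {y. S x y \<le> a} \<le> T D x"
proof
  assume "a < thr S T D x"
  then have ne: "thr_levels S T D x \<noteq> {}" and "a < Sup (thr_levels S T D x)"
    using assms(2) by (auto simp: thr_eq split: if_splits)
  then obtain l where l: "l \<in> thr_levels S T D x" "a < l"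
    using less_cSup_iff[OF ne bdd_above_thr_levels[of T D x S, OF assms(1)]] by blast
  have "card {y. S x y \<le> a} \<le> card {y. S x y < l}"
    using l(2) by (intro card_mono) auto
  with l(1) show "card {y. S x y \<le> a} \<le> T D x" by (simp add: thr_levels_def)
next
  assume card_le: "card {y. S x y \<le> a} \<le> T D x"
  obtain l where "a < l" and "\<And>t. t \<in> range (S x) \<Longrightarrow> t < l \<longleftrightarrow> t \<le> a"
    using finite_gap_above[of "range (S x)" a] by auto
  then have "{y. S x y < l} = {y. S x y \<le> a}" by auto
  with card_le \<open>a < l\<close> assms(2) have l: "l \<in> thr_levels S T D x"
    by (simp add: thr_levels_def)
  then have "l \<le> Sup (thr_levels S T D x)"
    using bdd_above_thr_levels[of T D x S, OF assms(1)] by (rule cSup_upper)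
  with l \<open>a < l\<close> show "a < thr S T D x" by (auto simp: thr_eq)
qed

lemma borel_measurable_thr:
  fixes S :: "'x \<Rightarrow> 'y::finite \<Rightarrow> real" and N :: "(('x \<times> 'y) multiset \<times> 'x) measure"
  assumes S_meas: "\<And>y. (\<lambda>x. S x y) \<in> borel_measurable MX" and snd_meas: "snd \<in> N \<rightarrow>\<^sub>M MX"
    and T_meas: "(\<lambda>c. T (fst c) (snd c)) \<in> N \<rightarrow>\<^sub>M count_space UNIV"
    and T_less: "\<And>D x. T D x < CARD('y)"
  shows "(\<lambda>c. thr S T (fst c) (snd c)) \<in> borel_measurable N"
  unfolding borel_measurable_iff_greater
proof
  fix a :: real
  show "{c \<in> space N. a < thr S T (fst c) (snd c)} \<in> sets N"
  proof (cases "0 \<le> a")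
    case False
    then have "a < thr S T D x" for D x
      using thr_nonneg[of T D x S, OF T_less] by linarith
    then show ?thesis by simp
  next
    case True
    have [measurable]: "(\<lambda>c. S (snd c) y) \<in> borel_measurable N" for y
      using measurable_compose[OF snd_meas S_meas] .
    have [measurable]: "(\<lambda>c. real (T (fst c) (snd c))) \<in> borel_measurable N"
      using measurable_compose[OF T_meas, of real borel] by simp
    have card_eq: "real (card {y. S (snd c) y \<le> a}) = (\<Sum>y\<in>UNIV. of_bool (S (snd c) y \<le> a))" for c
      by simp
    have "{c \<in> space N. a < thr S T (fst c) (snd c)} =
          {c \<in> space N. (\<Sum>y\<in>UNIV. of_bool (S (snd c) y \<le> a)) \<le> real (T (fst c) (snd c))}"
      using less_thr_iff[of T _ _ a S, OF T_less True] by (simp only: card_eq[symmetric] of_nat_le_iff)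
    also have "\<dots> \<in> sets N" by measurable
    finally show ?thesis .
  qed
qed

lemma Gop_le:
  assumes "mono_on {0..} (\<lambda>s. h s D x)" and "\<And>s. 0 \<le> s \<Longrightarrow> 0 \<le> h s D x"
    and "0 \<le> w D x" and "0 \<le> s"
  shows "Gop w h s D x \<le> h s D x"
  using assms mono_onD[OF assms(1), of "w D x" s] by (simp add: Gop_def)

lemma Gop_at_threshold: "Gop w h (w D x) D x = h (w D x) D x"
  by (simp add: Gop_def)

lemma Gop_idem: "Gop w (Gop w h) = Gop w h"
  by (simp add: Gop_def fun_eq_iff)

lemma Gop_in_Hbar:
  assumes h: "h \<in> Hbar N" and w_meas: "(\<lambda>c. w (fst c) (snd c)) \<in> borel_measurable N"
    and w_nonneg: "\<And>D x. 0 \<le> w D x"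
  shows "Gop w h \<in> Hbar N"
proof -
  have h_meas[measurable]: "(\<lambda>(s, c). h s (fst c) (snd c)) \<in> borel_measurable (borel \<Otimes>\<^sub>M N)"
    and h_nonneg: "\<And>s D x. 0 \<le> s \<Longrightarrow> 0 \<le> h s D x"
    using h by (auto simp: Hbar_def)
  note w_meas[measurable]
  have "(\<lambda>p. h (w (fst (snd p)) (snd (snd p))) (fst (snd p)) (snd (snd p))) \<in> borel_measurable (borel \<Otimes>\<^sub>M N)"
    using measurable_compose[OF _ h_meas, of "\<lambda>p. (w (fst (snd p)) (snd (snd p)), snd p)"]
    by simp
  then have "(\<lambda>(s, c). Gop w h s (fst c) (snd c)) \<in> borel_measurable (borel \<Otimes>\<^sub>M N)"
    unfolding Gop_def by measurable
  moreover have "mono_on {0..} (\<lambda>s. Gop w h s D x)" for D x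
    by (rule mono_onI) (use h_nonneg w_nonneg in \<open>simp add: Gop_def\<close>)
  ultimately show ?thesis
    using h_nonneg w_nonneg by (simp add: Hbar_def Gop_def)
qed

lemma Jfun_Gop_le:
  fixes S :: "'x \<Rightarrow> 'y::finite \<Rightarrow> real"
  assumes S_nonneg: "\<And>x y. 0 \<le> S x y" and T_less: "\<And>D x. T D x < CARD('y)"
    and h_mono: "\<And>D x. mono_on {0..} (\<lambda>s. h s D x)"
    and h_nonneg: "\<And>s D x. 0 \<le> s \<Longrightarrow> 0 \<le> h s D x"
  shows "Jfun M S T X Y n i (Gop (thr S T) h) \<le> Jfun M S T X Y n i h"
proof -
  have "h_cal S X Y n i (Gop (thr S T) h) \<omega> \<le> h_cal S X Y n i h \<omega>" for \<omega>
    unfolding h_cal_def by (intro Gop_le h_mono h_nonneg thr_nonneg T_less S_nonneg)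
  then have "(\<integral>\<^sup>+ \<omega>. ennreal (h_cal S X Y n i (Gop (thr S T) h) \<omega>) \<partial>M)
           \<le> (\<integral>\<^sup>+ \<omega>. ennreal (h_cal S X Y n i h \<omega>) \<partial>M)"
    by (intro nn_integral_mono ennreal_leI)
  moreover have "h_test S T X Y n (Gop (thr S T) h) = h_test S T X Y n h"
    by (simp add: h_test_def Gop_at_threshold fun_eq_iff)
  ultimately show ?thesis
    unfolding Jfun_def by (simp add: mult_right_mono)
qed

theorem corollary2:
  fixes M :: "'w measure" and MX :: "'x measure"
    and N :: "(('x \<times> 'y::finite) multiset \<times> 'x) measure"
    and X :: "nat \<Rightarrow> 'w \<Rightarrow> 'x" and Y :: "nat \<Rightarrow> 'w \<Rightarrow> 'y"
    and S :: "'x \<Rightarrow> 'y \<Rightarrow> real" and T :: "('x \<times> 'y) multiset \<Rightarrow> 'x \<Rightarrow> nat"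
    and n i :: nat
  assumes "prob_space M"
    and "exchangeable M (MX \<Otimes>\<^sub>M count_space UNIV) (\<lambda>j \<omega>. (X j \<omega>, Y j \<omega>)) (Suc n)"
    and "\<forall>x y. 0 \<le> S x y"
    and "\<forall>y. (\<lambda>x. S x y) \<in> borel_measurable MX"
    and "snd \<in> N \<rightarrow>\<^sub>M MX"
    and "(\<lambda>c. T (fst c) (snd c)) \<in> N \<rightarrow>\<^sub>M count_space UNIV"
    and "\<forall>D x. 1 \<le> T D x \<and> T D x < CARD('y)"
    and "(\<lambda>\<omega>. (dataD X Y n \<omega>, X (Suc n) \<omega>)) \<in> M \<rightarrow>\<^sub>M N"
    and "\<forall>j\<in>{1..n}. (\<lambda>\<omega>. (dataDi X Y n j \<omega>, X j \<omega>)) \<in> M \<rightarrow>\<^sub>M N"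
    and "1 \<le> i" and "i \<le> n"
  shows
    "(\<forall>h c0. h \<in> Hbar N \<and> 0 < c0 \<and> (AE \<omega> in M. c0 < h_test S T X Y n h \<omega>) \<longrightarrow>
        Gop (thr S T) h \<in> Hbar N \<and>
        Jfun M S T X Y n i (Gop (thr S T) h) \<le> Jfun M S T X Y n i h \<and>
        (P5 M S T X Y n i h \<and> P5 M S T X Y n i (Gop (thr S T) h) \<longrightarrow>
           ratio_exp M S T X Y n i (Gop (thr S T) h) \<le> ratio_exp M S T X Y n i h))
     \<and> (\<forall>h\<in>Hbar N. Gop (thr S T) (Gop (thr S T) h) = Gop (thr S T) h)
     \<and> (\<forall>c0. 0 < c0 \<and> (AE \<omega> in M. c0 < thr S T (dataD X Y n \<omega>) (X (Suc n) \<omega>)) \<longrightarrow>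
          Jfun M S T X Y n i (\<lambda>s D x. thr S T D x * (if thr S T D x \<le> s then 1 else 0))
            \<le> Jfun M S T X Y n i (\<lambda>s D x. s))"
proof -
  have S_nonneg: "\<And>x y. 0 \<le> S x y" and T_less: "\<And>D x. T D x < CARD('y)"
    using assms(3,7) by auto
  have thr_nonneg_all: "\<And>D x. 0 \<le> thr S T D x"
    using thr_nonneg[of T _ _ S] T_less by blast
  have thr_meas: "(\<lambda>c. thr S T (fst c) (snd c)) \<in> borel_measurable N"
    using borel_measurable_thr[OF _ assms(5,6) T_less] assms(4) by blast
  have Jfun_le: "Jfun M S T X Y n i (Gop (thr S T) h) \<le> Jfun M S T X Y n i h" if "h \<in> Hbar N" for h
    using that Jfun_Gop_le[OF S_nonneg T_less, of h] by (simp add: Hbar_def)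
  have Jfun_le_id: "Jfun M S T X Y n i (Gop (thr S T) (\<lambda>s D x. s)) \<le> Jfun M S T X Y n i (\<lambda>s D x. s)"
    by (rule Jfun_Gop_le[OF S_nonneg T_less]) (simp_all add: mono_on_def)
  show ?thesis
    using Gop_in_Hbar[OF _ thr_meas thr_nonneg_all] Jfun_le Gop_idem Jfun_le_id[unfolded Gop_def]
    by (auto simp: P5_def)
qed

end
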